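(* For any infinite graph $G$ it is possible to attach vertices to the edges of $G$ (i.e. subdivide edges by new vertices) to form a graph that is VEL-parabolic.
   Context: Graphs are simple, connected, locally finite. For an infinite graph with base vertex $v_0$, let $\Gamma_\infty$ be the family of infinite vertex paths (consecutive vertices adjacent or equal) from $v_0$ to infinity (visiting each vertex only finitely often). The graph is VEL-parabolic if $\sup_m(\inf_{\gamma\in\Gamma_\infty}\sum_{v\in\gamma}m(v))^2/\sum_v m(v)^2=\infty$, the supremum over vertex metrics $m:V\to[0,\infty)$ of finite non-zero area, and VEL-hyperbolic otherwise. *)

theory Defs
  imports "HOL-Analysis.Analysis" "HOL-Library.Extended_Nonnegative_Real"
begin

definition simple_graph :: "'a set \<Rightarrow> ('a \<Rightarrow> 'a \<Rightarrow> bool) \<Rightarrow> bool" where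
  "simple_graph V E \<longleftrightarrow>
     (\<forall>u v. E u v \<longrightarrow> u \<in> V \<and> v \<in> V) \<and>
     (\<forall>u v. E u v \<longrightarrow> E v u) \<and> (\<forall>v. \<not> E v v)"

definition connected_graph :: "'a set \<Rightarrow> ('a \<Rightarrow> 'a \<Rightarrow> bool) \<Rightarrow> bool" where
  "connected_graph V E \<longleftrightarrow> V \<noteq> {} \<and> (\<forall>u\<in>V. \<forall>v\<in>V. E\<^sup>*\<^sup>* u v)"

definition locally_finite :: "'a set \<Rightarrow> ('a \<Rightarrow> 'a \<Rightarrow> bool) \<Rightarrow> bool" where
  "locally_finite V E \<longleftrightarrow> (\<forall>v\<in>V. finite {w. E v w})"

definition graph :: "'a set \<Rightarrow> ('a \<Rightarrow> 'a \<Rightarrow> bool) \<Rightarrow> bool" where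
  "graph V E \<longleftrightarrow> simple_graph V E \<and> connected_graph V E \<and> locally_finite V E"

definition paths_to_infinity :: "'a set \<Rightarrow> ('a \<Rightarrow> 'a \<Rightarrow> bool) \<Rightarrow> 'a \<Rightarrow> (nat \<Rightarrow> 'a) set" where
  "paths_to_infinity V E v0 = {\<gamma>. \<gamma> 0 = v0 \<and> (\<forall>n. \<gamma> n \<in> V) \<and>
      (\<forall>n. \<gamma> (Suc n) = \<gamma> n \<or> E (\<gamma> n) (\<gamma> (Suc n))) \<and>
      (\<forall>v. finite {n. \<gamma> n = v})}"

definition ensum :: "('a \<Rightarrow> real) \<Rightarrow> 'a set \<Rightarrow> ennreal" where
  "ensum f A = (SUP F \<in> {F. finite F \<and> F \<subseteq> A}. (\<Sum>v\<in>F. ennreal (f v)))"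

definition m_length :: "('a \<Rightarrow> real) \<Rightarrow> (nat \<Rightarrow> 'a) \<Rightarrow> ennreal" where
  "m_length m \<gamma> = ensum m (range \<gamma>)"

definition area :: "'a set \<Rightarrow> ('a \<Rightarrow> real) \<Rightarrow> ennreal" where
  "area V m = ensum (\<lambda>v. (m v)\<^sup>2) V"

definition vertex_metrics :: "'a set \<Rightarrow> ('a \<Rightarrow> real) set" where
  "vertex_metrics V = {m. (\<forall>v\<in>V. 0 \<le> m v) \<and> 0 < area V m \<and> area V m < \<infinity>}"

definition VEL :: "'a set \<Rightarrow> ('a \<Rightarrow> 'a \<Rightarrow> bool) \<Rightarrow> 'a \<Rightarrow> ennreal" where
  "VEL V E v0 = (SUP m \<in> vertex_metrics V.
       (INF \<gamma> \<in> paths_to_infinity V E v0. m_length m \<gamma>)\<^sup>2 / area V m)"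

definition VEL_parabolic :: "'a set \<Rightarrow> ('a \<Rightarrow> 'a \<Rightarrow> bool) \<Rightarrow> 'a \<Rightarrow> bool" where
  "VEL_parabolic V E v0 \<longleftrightarrow> VEL V E v0 = \<infinity>"

text \<open>The i-th point from u
  (0 \<le> i \<le> n+1, n = k {u,v}) is u for i = 0, v for i = n+1, and otherwise the new vertex
  Inr {(u,i),(v,n+1-i)}, which is symmetric in the orientation of the edge.\<close>

definition sub_pt :: "('a set \<Rightarrow> nat) \<Rightarrow> 'a \<Rightarrow> 'a \<Rightarrow> nat \<Rightarrow> 'a + ('a \<times> nat) set" where
  "sub_pt k u v i = (let n = k {u, v} in
      if i = 0 then Inl u else if i = Suc n then Inl v
      else Inr {(u, i), (v, Suc n - i)})"

definition sub_V :: "'a set \<Rightarrow> ('a \<Rightarrow> 'a \<Rightarrow> bool) \<Rightarrow> ('a set \<Rightarrow> nat) \<Rightarrow> ('a + ('a \<times> nat) set) set" where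
  "sub_V V E k = Inl ` V \<union> {sub_pt k u v i | u v i. E u v \<and> 1 \<le> i \<and> i \<le> k {u, v}}"

definition sub_E :: "('a \<Rightarrow> 'a \<Rightarrow> bool) \<Rightarrow> ('a set \<Rightarrow> nat) \<Rightarrow> 'a + ('a \<times> nat) set \<Rightarrow> 'a + ('a \<times> nat) set \<Rightarrow> bool" where
  "sub_E E k x y \<longleftrightarrow> (\<exists>u v i. E u v \<and> i \<le> k {u, v} \<and> x = sub_pt k u v i \<and> y = sub_pt k u v (Suc i))"

end

theory Submission
  imports Defs
begin

text \<open>Put \<open>k(e) = 2^n\<close> new vertices on the \<open>n\<close>-th edge (the edges of a connected locally finite
  graph are countable) and give each new vertex on \<open>e\<close> the weight \<open>1 / k(e)\<close>, the original
  vertices weight \<open>0\<close>. The area is \<open>\<Sum>\<^sub>e k(e) \<cdot> k(e)\<^sup>-\<^sup>2 \<le> 2\<close>, while crossing an edge completely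
  costs length \<open>1\<close>. A path to infinity leaves every finite set \<open>C\<close> of original vertices, and the
  only way out is to cross an edge from \<open>C\<close> to a vertex outside \<open>C\<close>; hence it crosses infinitely
  many edges and has infinite length, for every choice of base vertex.\<close>

lemma ex_last_nat_less:
  fixes P :: "nat \<Rightarrow> bool"
  assumes "\<not> P s" "P t" "s \<le> t"
  shows "\<exists>j. s \<le> j \<and> j < t \<and> \<not> P j \<and> (\<forall>i. j < i \<and> i \<le> t \<longrightarrow> P i)"
  using assms(2,3)
proof (induction t)
  case 0
  then show ?case using assms(1) by simp
next
  case (Suc t)
  show ?case
  proof (cases "s \<le> t \<and> P t")
    case True
    with Suc.IH obtain j where "s \<le> j" "j < t" "\<not> P j" "\<forall>i. j < i \<and> i \<le> t \<longrightarrow> P i"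
      by blast
    with Suc.prems(1) show ?thesis by (metis le_Suc_eq less_SucI)
  next
    case False
    with Suc.prems assms(1) have "s \<le> t" "\<not> P t" by (auto simp: le_Suc_eq)
    with Suc.prems(1) show ?thesis by (intro exI[of _ t]) (auto simp: le_Suc_eq)
  qed
qed

lemma ensum_upper: "finite F \<Longrightarrow> F \<subseteq> A \<Longrightarrow> (\<Sum>v\<in>F. ennreal (f v)) \<le> ensum f A"
  unfolding ensum_def by (rule SUP_upper) auto

lemma ensum_least:
  "(\<And>F. finite F \<Longrightarrow> F \<subseteq> A \<Longrightarrow> (\<Sum>v\<in>F. ennreal (f v)) \<le> B) \<Longrightarrow> ensum f A \<le> B"
  unfolding ensum_def by (rule SUP_least) auto

lemma sum_inj_geometric_le:
  fixes \<nu> :: "'a \<Rightarrow> nat"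
  assumes "finite D" "inj_on \<nu> D"
  shows "(\<Sum>e\<in>D. (1/2::real) ^ \<nu> e) \<le> 2"
proof -
  have "(\<Sum>e\<in>D. (1/2::real) ^ \<nu> e) = (\<Sum>j\<in>\<nu> ` D. (1/2::real) ^ j)"
    using assms(2) by (simp add: sum.reindex)
  also have "\<dots> \<le> (\<Sum>j. (1/2::real) ^ j)"
    using assms(1) by (intro sum_le_suminf summable_geometric) auto
  also have "\<dots> = 2"
    using suminf_geometric[of "1/2::real"] by simp
  finally show ?thesis .
qed

lemma VEL_parabolicI:
  assumes "m \<in> vertex_metrics V"
    and "\<And>\<gamma>. \<gamma> \<in> paths_to_infinity V E v0 \<Longrightarrow> m_length m \<gamma> = \<infinity>"
  shows "VEL_parabolic V E v0"
proof -
  have "area V m < \<infinity>"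
    using assms(1) by (simp add: vertex_metrics_def)
  have "(INF \<gamma>\<in>paths_to_infinity V E v0. m_length m \<gamma>) = \<infinity>"
    using assms(2) by simp
  then have "\<infinity> = (INF \<gamma>\<in>paths_to_infinity V E v0. m_length m \<gamma>)\<^sup>2 / area V m"
    using \<open>area V m < \<infinity>\<close> by (simp add: ennreal_top_divide power_top_ennreal)
  also have "\<dots> \<le> VEL V E v0"
    unfolding VEL_def using assms(1) by (rule SUP_upper)
  finally show ?thesis
    unfolding VEL_parabolic_def by (simp add: top_unique)
qed

lemma paths_to_infinity_leave_finite:
  assumes "\<gamma> \<in> paths_to_infinity V E v0" "finite R"
  shows "\<exists>t. \<gamma> t \<notin> R"
proof (rule ccontr)
  assume "\<not> (\<exists>t. \<gamma> t \<notin> R)"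
  then have "finite (range \<gamma>)"
    using \<open>finite R\<close> by (auto intro: finite_subset)
  moreover have "finite {r. \<gamma> r = x}" for x
    using assms(1) by (simp add: paths_to_infinity_def)
  ultimately show False
    using pigeonhole_infinite[of UNIV \<gamma>] by auto
qed

definition edges :: "('a \<Rightarrow> 'a \<Rightarrow> bool) \<Rightarrow> 'a set set" where
  "edges E = {{u, v} | u v. E u v}"

lemma graph_finite_neighbours:
  assumes "graph V E"
  shows "finite {v. E u v}"
proof (cases "u \<in> V")
  case True
  then show ?thesis using assms by (auto simp: graph_def locally_finite_def)
next
  case False
  then have "{v. E u v} = {}"
    using assms by (auto simp: graph_def simple_graph_def)
  then show ?thesis by simp
qed

lemma countable_vertices:
  assumes "graph V E"
  shows "countable V"
proof -
  obtain r where "r \<in> V"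
    using assms by (auto simp: graph_def connected_graph_def)
  have layers: "finite {v. (E ^^ n) r v}" for n
  proof (induction n)
    case (Suc n)
    have "{v. (E ^^ Suc n) r v} = (\<Union>y\<in>{v. (E ^^ n) r v}. {v. E y v})"
      by (auto simp: relpowp_Suc_right)
    with Suc graph_finite_neighbours[OF assms] show ?case by simp
  qed simp
  have "V \<subseteq> (\<Union>n. {v. (E ^^ n) r v})"
    using assms \<open>r \<in> V\<close> by (auto simp: graph_def connected_graph_def rtranclp_power)
  moreover have "countable (\<Union>n. {v. (E ^^ n) r v})"
    using layers by (intro countable_UN) (auto intro: countable_finite)
  ultimately show ?thesis
    by (rule countable_subset)
qed

lemma countable_edges: "graph V E \<Longrightarrow> countable (edges E)"
proof -
  assume "graph V E"
  then have "edges E \<subseteq> (\<lambda>(u, v). {u, v}) ` (V \<times> V)"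
    by (auto simp: edges_def graph_def simple_graph_def)
  moreover have "countable ((\<lambda>(u, v). {u, v}) ` (V \<times> V))"
    using countable_vertices[OF \<open>graph V E\<close>] by auto
  ultimately show ?thesis
    by (rule countable_subset)
qed

lemma sum_dyadic_edge_weights:
  assumes "graph V E" "finite D" "D \<subseteq> edges E"
  shows "(\<Sum>e\<in>D. 1 / real (2 ^ to_nat_on (edges E) e :: nat)) \<le> 2"
proof -
  have "inj_on (to_nat_on (edges E)) D"
    using inj_on_to_nat_on[OF countable_edges[OF assms(1)]] assms(3) by (rule inj_on_subset)
  with assms(2) have "(\<Sum>e\<in>D. (1/2::real) ^ to_nat_on (edges E) e) \<le> 2"
    by (rule sum_inj_geometric_le)
  then show ?thesis
    by (simp add: power_one_over)
qed

lemma connected_graph_has_edge: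
  assumes "connected_graph V E" "a \<in> V" "b \<in> V" "a \<noteq> b"
  shows "\<exists>u v. E u v"
proof -
  have "E\<^sup>*\<^sup>* a b"
    using assms by (auto simp: connected_graph_def)
  with \<open>a \<noteq> b\<close> show ?thesis
    by (metis converse_rtranclpE)
qed

lemma sub_pt_0 [simp]: "sub_pt k u v 0 = Inl u"
  by (simp add: sub_pt_def Let_def)

lemma sub_pt_last [simp]: "sub_pt k u v (Suc (k {u, v})) = Inl v"
  by (simp add: sub_pt_def Let_def)

lemma sub_pt_inner:
  "1 \<le> i \<Longrightarrow> i \<le> k {u, v} \<Longrightarrow> sub_pt k u v i = Inr {(u, i), (v, Suc (k {u, v}) - i)}"
  by (simp add: sub_pt_def Let_def)

lemma sub_pt_swap:
  "i \<le> Suc (k {u, v}) \<Longrightarrow> sub_pt k v u (Suc (k {u, v}) - i) = sub_pt k u v i"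
  by (auto simp: sub_pt_def Let_def insert_commute)

lemma sub_pt_isl_iff:
  "i \<le> Suc (k {u, v}) \<Longrightarrow> isl (sub_pt k u v i) \<longleftrightarrow> i = 0 \<or> i = Suc (k {u, v})"
  by (simp add: sub_pt_def Let_def)

lemma inj_on_sub_pt: "u \<noteq> v \<Longrightarrow> inj_on (sub_pt k u v) {0..Suc (k {u, v})}"
  by (rule inj_onI) (auto simp: sub_pt_def Let_def doubleton_eq_iff split: if_splits)

lemma sub_pt_eq_iff:
  "u \<noteq> v \<Longrightarrow> i \<le> Suc (k {u, v}) \<Longrightarrow> j \<le> Suc (k {u, v}) \<Longrightarrow>
    sub_pt k u v i = sub_pt k u v j \<longleftrightarrow> i = j"
  using inj_on_sub_pt[THEN inj_onD] by fastforce

text \<open>For a new vertex \<open>Inr {(u, i), (v, n + 1 - i)}\<close> this is the subdivided edge \<open>{u, v}\<close>.\<close>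

definition host :: "'a + ('a \<times> nat) set \<Rightarrow> 'a set" where
  "host x = (case x of Inl a \<Rightarrow> {a} | Inr S \<Rightarrow> fst ` S)"

lemma host_Inl [simp]: "host (Inl a) = {a}"
  by (simp add: host_def)

lemma host_sub_pt_inner: "1 \<le> i \<Longrightarrow> i \<le> k {u, v} \<Longrightarrow> host (sub_pt k u v i) = {u, v}"
  by (simp add: sub_pt_inner host_def)

definition edge_interior :: "('a set \<Rightarrow> nat) \<Rightarrow> 'a set \<Rightarrow> ('a + ('a \<times> nat) set) set" where
  "edge_interior k e = (\<Union>(u, v) \<in> {(u, v). e = {u, v}}. sub_pt k u v ` {1..k e})"

lemma edge_interior_doubleton: "edge_interior k {u, v} = sub_pt k u v ` {1..k {u, v}}"
proof -
  have reverse: "sub_pt k b a ` {1..k {a, b}} \<subseteq> sub_pt k a b ` {1..k {a, b}}" for a b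
  proof
    fix x assume "x \<in> sub_pt k b a ` {1..k {a, b}}"
    then obtain i where i: "i \<in> {1..k {a, b}}" "x = sub_pt k b a i" by blast
    then have "x = sub_pt k a b (Suc (k {a, b}) - i)"
      using sub_pt_swap[of i k b a] by (simp add: insert_commute)
    moreover have "Suc (k {a, b}) - i \<in> {1..k {a, b}}" using i(1) by auto
    ultimately show "x \<in> sub_pt k a b ` {1..k {a, b}}" by blast
  qed
  have "sub_pt k v u ` {1..k {u, v}} = sub_pt k u v ` {1..k {u, v}}"
    using reverse[of u v] reverse[of v u] by (auto simp: insert_commute)
  then show ?thesis
    by (auto simp: edge_interior_def doubleton_eq_iff insert_commute)
qed

lemma edge_interiorD:
  assumes "x \<in> edge_interior k e"
  shows "\<not> isl x" "host x = e"
  using assms by (auto simp: edge_interior_def sub_pt_inner host_def)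

lemma finite_edge_interior: "finite (edge_interior k e)"
  by (cases "\<exists>u v. e = {u, v}") (auto simp: edge_interior_doubleton, auto simp: edge_interior_def)

lemma card_edge_interior: "u \<noteq> v \<Longrightarrow> card (edge_interior k {u, v}) = k {u, v}"
  unfolding edge_interior_doubleton
  by (subst card_image) (auto intro: inj_on_subset[OF inj_on_sub_pt])

lemma sub_V_eq: "sub_V V E k = Inl ` V \<union> (\<Union>e\<in>edges E. edge_interior k e)"
proof -
  have "(\<Union>e\<in>edges E. edge_interior k e) = {sub_pt k u v i | u v i. E u v \<and> 1 \<le> i \<and> i \<le> k {u, v}}"
  proof (intro equalityI subsetI)
    fix x assume "x \<in> (\<Union>e\<in>edges E. edge_interior k e)"
    then obtain a b i where "E a b" "1 \<le> i" "i \<le> k {a, b}" "x = sub_pt k a b i"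
      by (auto simp: edges_def edge_interior_doubleton)
    then show "x \<in> {sub_pt k u v i | u v i. E u v \<and> 1 \<le> i \<and> i \<le> k {u, v}}"
      by blast
  next
    fix x assume "x \<in> {sub_pt k u v i | u v i. E u v \<and> 1 \<le> i \<and> i \<le> k {u, v}}"
    then obtain u v i where "E u v" "1 \<le> i" "i \<le> k {u, v}" "x = sub_pt k u v i"
      by blast
    then have "{u, v} \<in> edges E" "x \<in> edge_interior k {u, v}"
      by (auto simp: edges_def edge_interior_doubleton)
    then show "x \<in> (\<Union>e\<in>edges E. edge_interior k e)" by blast
  qed
  then show ?thesis
    unfolding sub_V_def by blast
qed

lemma sub_V_inner:
  assumes "x \<in> sub_V V E k" "\<not> isl x"
  shows "host x \<in> edges E" "x \<in> edge_interior k (host x)"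
  using assms edge_interiorD(2) by (auto simp: sub_V_eq)

lemma sub_E_cases:
  assumes "sub_E E k x x'" and k_pos: "\<And>e. 0 < k e"
  obtains (from_end) u v where "E u v" "x = Inl u" "x' \<in> edge_interior k {u, v}"
    | (to_end) u v where "E u v" "x \<in> edge_interior k {u, v}" "x' = Inl v"
    | (inner) u v where "E u v" "x \<in> edge_interior k {u, v}" "x' \<in> edge_interior k {u, v}"
proof -
  obtain u v l where uv: "E u v" "l \<le> k {u, v}" "x = sub_pt k u v l" "x' = sub_pt k u v (Suc l)"
    using assms(1) by (auto simp: sub_E_def)
  have "0 < k {u, v}" by (rule k_pos)
  consider "l = 0" | "l = k {u, v}" "l \<noteq> 0" | "0 < l" "l < k {u, v}"
    using uv(2) by linarith
  then show thesis
  proof cases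
    case 1
    with uv \<open>0 < k {u, v}\<close> show thesis by (intro from_end) (auto simp: edge_interior_doubleton)
  next
    case 2
    with uv show thesis by (intro to_end) (auto simp: edge_interior_doubleton)
  next
    case 3
    with uv show thesis by (intro inner) (auto simp: edge_interior_doubleton)
  qed
qed

lemma sub_E_sub_pt:
  assumes step: "sub_E E k (sub_pt k y z i) (sub_pt k y z j)" and k_pos: "\<And>e. 0 < k e"
    and "y \<noteq> z" "i \<le> Suc (k {y, z})" "j \<le> Suc (k {y, z})"
  shows "j = Suc i \<or> i = Suc j"
proof -
  obtain u v l where "l \<le> k {u, v}"
    and x: "sub_pt k u v l = sub_pt k y z i" and x': "sub_pt k u v (Suc l) = sub_pt k y z j"
    using step by (auto simp: sub_E_def)
  obtain m h where m: "1 \<le> m" "m \<le> k {u, v}" and h: "h \<le> Suc (k {y, z})"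
    and mh: "sub_pt k u v m = sub_pt k y z h"
  proof (cases "l = 0")
    case True
    with x' k_pos[of "{u, v}"] assms(5) show thesis by (intro that[of 1 j]) auto
  next
    case False
    with x \<open>l \<le> k {u, v}\<close> assms(4) show thesis by (intro that[of l i]) auto
  qed
  have "\<not> isl (sub_pt k y z h)"
    using mh m sub_pt_isl_iff[of m k u v] by auto
  then have "1 \<le> h" "h \<le> k {y, z}"
    using h sub_pt_isl_iff[of h k y z] by auto
  then have same_edge: "{u, v} = {y, z}"
    using mh m by (metis host_sub_pt_inner)
  then have n: "k {u, v} = k {y, z}" by simp
  from same_edge consider "u = y" "v = z" | "u = z" "v = y"
    by (auto simp: doubleton_eq_iff)
  then show ?thesis
  proof cases
    case 1
    with x x' \<open>l \<le> k {u, v}\<close> assms(3-5) show ?thesis by (simp add: sub_pt_eq_iff)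
  next
    case 2
    have "sub_pt k z y l' = sub_pt k y z (Suc (k {y, z}) - l')" if "l' \<le> Suc (k {y, z})" for l'
      using sub_pt_swap[of "Suc (k {y, z}) - l'" k y z] that by simp
    with 2 x x' \<open>l \<le> k {u, v}\<close> n assms(3-5) show ?thesis by (simp add: sub_pt_eq_iff) linarith
  qed
qed

lemma sub_pt_walk_covers:
  assumes step: "\<And>r. s \<le> r \<Longrightarrow> r < t \<Longrightarrow> \<gamma> (Suc r) = \<gamma> r \<or> sub_E E k (\<gamma> r) (\<gamma> (Suc r))"
    and k_pos: "\<And>e. 0 < k e" and "y \<noteq> z" "s \<le> t"
    and pos: "\<And>r. s \<le> r \<Longrightarrow> r \<le> t \<Longrightarrow> p r \<le> Suc (k {y, z}) \<and> \<gamma> r = sub_pt k y z (p r)"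
    and "p s = 0" "p t = Suc (k {y, z})"
  shows "sub_pt k y z ` {0..Suc (k {y, z})} \<subseteq> \<gamma> ` {s..t}"
proof
  have "\<bar>int (p (Suc r)) - int (p r)\<bar> \<le> 1" if r: "s \<le> r" "r < t" for r
  proof -
    have le: "p r \<le> Suc (k {y, z})" "p (Suc r) \<le> Suc (k {y, z})"
      and pt: "\<gamma> r = sub_pt k y z (p r)" "\<gamma> (Suc r) = sub_pt k y z (p (Suc r))"
      using pos[of r] pos[of "Suc r"] r by auto
    from step[OF r] show ?thesis
    proof
      assume "\<gamma> (Suc r) = \<gamma> r"
      then have "p (Suc r) = p r"
        using sub_pt_eq_iff[where k = k, OF \<open>y \<noteq> z\<close> le(2,1)] pt by simp
      then show ?thesis by simp
    next
      assume "sub_E E k (\<gamma> r) (\<gamma> (Suc r))"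
      then have "p (Suc r) = Suc (p r) \<or> p r = Suc (p (Suc r))"
        using sub_E_sub_pt[where k = k, OF _ k_pos \<open>y \<noteq> z\<close> le] pt by simp
      then show ?thesis by auto
    qed
  qed
  moreover fix x assume "x \<in> sub_pt k y z ` {0..Suc (k {y, z})}"
  then obtain j where j: "j \<le> Suc (k {y, z})" "x = sub_pt k y z j"
    by auto
  ultimately obtain r where "s \<le> r" "r \<le> t" "int (p r) = int j"
    using nat_intermed_int_val[of s t "\<lambda>r. int (p r)" "int j"] \<open>s \<le> t\<close>
      \<open>p s = 0\<close> \<open>p t = Suc (k {y, z})\<close> by auto
  with pos j show "x \<in> \<gamma> ` {s..t}" by force
qed

lemma path_traverses_edge:
  assumes step: "\<And>r. s \<le> r \<Longrightarrow> r < t \<Longrightarrow> \<gamma> (Suc r) = \<gamma> r \<or> sub_E E k (\<gamma> r) (\<gamma> (Suc r))"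
    and k_pos: "\<And>e. 0 < k e" and "y \<noteq> z" "s \<le> t"
    and start: "\<gamma> s = Inl y" and stop: "\<gamma> t = Inl z"
    and inside: "\<And>r. s < r \<Longrightarrow> r < t \<Longrightarrow> \<gamma> r \<in> edge_interior k {y, z}"
  shows "edge_interior k {y, z} \<subseteq> \<gamma> ` {s..t}"
proof -
  define A where "A = {0..Suc (k {y, z})}"
  define p where "p r = the_inv_into A (sub_pt k y z) (\<gamma> r)" for r
  have inj: "inj_on (sub_pt k y z) A"
    unfolding A_def using inj_on_sub_pt \<open>y \<noteq> z\<close> .
  have on_edge: "\<gamma> r \<in> sub_pt k y z ` A" if r: "s \<le> r" "r \<le> t" for r
  proof -
    consider "r = s" | "r = t" | "s < r" "r < t" using r by (metis le_neq_implies_less)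
    then show ?thesis
    proof cases
      case 1
      with start show ?thesis unfolding A_def by (intro image_eqI[where x = 0]) auto
    next
      case 2
      with stop show ?thesis unfolding A_def by (intro image_eqI[where x = "Suc (k {y, z})"]) auto
    next
      case 3
      have "{1..k {y, z}} \<subseteq> A" unfolding A_def by auto
      with inside[OF 3] show ?thesis unfolding edge_interior_doubleton by blast
    qed
  qed
  have "sub_pt k y z ` A \<subseteq> \<gamma> ` {s..t}"
    unfolding A_def
  proof (rule sub_pt_walk_covers[where \<gamma> = \<gamma> and k = k, OF step k_pos \<open>y \<noteq> z\<close> \<open>s \<le> t\<close>])
    show "p r \<le> Suc (k {y, z}) \<and> \<gamma> r = sub_pt k y z (p r)" if "s \<le> r" "r \<le> t" for r
      using the_inv_into_into[OF inj on_edge[OF that] subset_refl]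
        f_the_inv_into_f[OF inj on_edge[OF that]]
      unfolding p_def A_def by auto
    show "p s = 0" "p t = Suc (k {y, z})"
      using the_inv_into_f_eq[OF inj, of 0 "Inl y"] the_inv_into_f_eq[OF inj, of "Suc (k {y, z})" "Inl z"]
        start stop unfolding p_def A_def by auto
  qed
  moreover have "edge_interior k {y, z} \<subseteq> sub_pt k y z ` A"
    unfolding edge_interior_doubleton A_def by auto
  ultimately show ?thesis
    by blast
qed

lemma sub_E_leaving:
  assumes "sub_E E k x x'" "\<And>e. 0 < k e" "host x \<inter> C \<noteq> {}" "host x' \<inter> C = {}"
  obtains y z where "E y z" "y \<in> C" "z \<notin> C" "x \<in> edge_interior k {y, z}" "x' = Inl z"
proof (rule sub_E_cases[OF assms(1,2)])
  fix u v assume "x = Inl u" "x' \<in> edge_interior k {u, v}"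
  with assms(3,4) show thesis using edge_interiorD(2)[of x' k "{u, v}"] by auto
next
  fix u v assume "E u v" "x \<in> edge_interior k {u, v}" "x' = Inl v"
  with assms(3,4) show thesis using edge_interiorD(2)[of x k "{u, v}"] that[of u v] by auto
next
  fix u v assume "x \<in> edge_interior k {u, v}" "x' \<in> edge_interior k {u, v}"
  with assms(3,4) show thesis using edge_interiorD(2) by metis
qed

lemma sub_E_entering:
  assumes "sub_E E k x x'" "\<And>e. 0 < k e" "x \<notin> edge_interior k e" "x' \<in> edge_interior k e"
  shows "\<exists>a\<in>e. x = Inl a"
proof (rule sub_E_cases[OF assms(1,2)])
  fix u v assume "x = Inl u" "x' \<in> edge_interior k {u, v}"
  with assms(4) show ?thesis
    using edge_interiorD(2)[of x' k e] edge_interiorD(2)[of x' k "{u, v}"] by auto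
next
  fix u v assume "x' = Inl v"
  with assms(4) show ?thesis using edge_interiorD(1) by fastforce
next
  fix u v assume "x \<in> edge_interior k {u, v}" "x' \<in> edge_interior k {u, v}"
  with assms(3,4) show ?thesis using edge_interiorD(2) by metis
qed

lemma path_traverses_edge_before_exit:
  assumes step: "\<And>r. \<gamma> (Suc r) = \<gamma> r \<or> sub_E E k (\<gamma> r) (\<gamma> (Suc r))"
    and k_pos: "\<And>e. 0 < k e" and "y \<noteq> z"
    and outside: "\<gamma> s \<notin> edge_interior k {y, z}" and "s \<le> p"
    and inside: "\<gamma> p \<in> edge_interior k {y, z}" and exit: "\<gamma> (Suc p) = Inl z"
    and avoids_end: "\<And>r. s \<le> r \<Longrightarrow> r \<le> p \<Longrightarrow> \<gamma> r \<noteq> Inl z"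
  shows "edge_interior k {y, z} \<subseteq> range \<gamma>"
proof -
  let ?I = "edge_interior k {y, z}"
  obtain j where "s \<le> j" "j < p" "\<gamma> j \<notin> ?I" and after: "\<forall>i. j < i \<and> i \<le> p \<longrightarrow> \<gamma> i \<in> ?I"
    using ex_last_nat_less[of "\<lambda>r. \<gamma> r \<in> ?I" s p] outside inside \<open>s \<le> p\<close> by blast
  then have "\<gamma> (Suc j) \<in> ?I"
    by simp
  with \<open>\<gamma> j \<notin> ?I\<close> have "sub_E E k (\<gamma> j) (\<gamma> (Suc j))"
    using step[of j] by auto
  then obtain a where "a \<in> {y, z}" "\<gamma> j = Inl a"
    using sub_E_entering[where k = k, OF _ k_pos \<open>\<gamma> j \<notin> ?I\<close> \<open>\<gamma> (Suc j) \<in> ?I\<close>] by blast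
  with avoids_end[of j] \<open>s \<le> j\<close> \<open>j < p\<close> have entry: "\<gamma> j = Inl y"
    by auto
  have "?I \<subseteq> \<gamma> ` {j..Suc p}"
  proof (rule path_traverses_edge[where \<gamma> = \<gamma> and k = k, OF _ k_pos \<open>y \<noteq> z\<close> _ entry exit])
    show "\<gamma> (Suc r) = \<gamma> r \<or> sub_E E k (\<gamma> r) (\<gamma> (Suc r))" for r
      by (rule step)
    show "j \<le> Suc p"
      using \<open>j < p\<close> by simp
    show "\<gamma> r \<in> ?I" if "j < r" "r < Suc p" for r
      using after that by simp
  qed
  then show ?thesis
    by auto
qed

lemma sum_UN_edge_interior:
  "finite D \<Longrightarrow> (\<Sum>x\<in>\<Union>(edge_interior k ` D). f x) = (\<Sum>e\<in>D. \<Sum>x\<in>edge_interior k e. f x)"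
  by (rule sum.UNION_disjoint) (auto simp: finite_edge_interior dest: edge_interiorD(2))

definition subdivision_metric :: "('a set \<Rightarrow> nat) \<Rightarrow> 'a + ('a \<times> nat) set \<Rightarrow> real" where
  "subdivision_metric k x = (if isl x then 0 else 1 / real (k (host x)))"

lemma subdivision_metric_nonneg: "0 \<le> subdivision_metric k x"
  by (simp add: subdivision_metric_def)

lemma sum_subdivision_metric_edge_interior:
  assumes "u \<noteq> v"
  shows "(\<Sum>x\<in>edge_interior k {u, v}. f (subdivision_metric k x))
    = real (k {u, v}) * f (1 / real (k {u, v}))"
proof -
  have "(\<Sum>x\<in>edge_interior k {u, v}. f (subdivision_metric k x))
      = (\<Sum>x\<in>edge_interior k {u, v}. f (1 / real (k {u, v})))"
    by (intro sum.cong) (auto simp: subdivision_metric_def dest: edge_interiorD)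
  then show ?thesis
    using card_edge_interior[OF assms] by simp
qed

locale subdivided_graph =
  fixes V :: "'a set" and E :: "'a \<Rightarrow> 'a \<Rightarrow> bool" and k :: "'a set \<Rightarrow> nat"
  assumes graph: "graph V E" and k_pos: "\<And>e. 0 < k e"
begin

lemma adj_sym: "E u v \<Longrightarrow> E v u"
  and adj_irrefl: "\<not> E u u"
  using graph by (auto simp: graph_def simple_graph_def)

lemma edgesE:
  assumes "e \<in> edges E"
  obtains u v where "e = {u, v}" "u \<noteq> v" "E u v"
proof -
  from assms obtain u v where "e = {u, v}" "E u v"
    by (auto simp: edges_def)
  moreover from \<open>E u v\<close> have "u \<noteq> v"
    using adj_irrefl by blast
  ultimately show thesis using that by simp
qed

lemma finite_edges_meeting: "finite C \<Longrightarrow> finite {e \<in> edges E. e \<inter> C \<noteq> {}}"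
proof -
  assume "finite C"
  have cover: "{e \<in> edges E. e \<inter> C \<noteq> {}} \<subseteq> (\<lambda>(u, v). {u, v}) ` (SIGMA u:C. {v. E u v})"
    by (auto simp: edges_def image_iff insert_commute intro: adj_sym)
  have "finite (SIGMA u:C. {v. E u v})"
    using \<open>finite C\<close> graph_finite_neighbours[OF graph] by auto
  from finite_surj[OF this cover] show ?thesis .
qed

lemma host_sub_V:
  assumes "x \<in> sub_V V E k"
  shows "finite (host x)" "host x \<noteq> {}"
  using assms by (auto simp: sub_V_eq elim!: edgesE dest!: edge_interiorD(2))

lemma finite_sub_V_near: "finite C \<Longrightarrow> finite {x \<in> sub_V V E k. host x \<inter> C \<noteq> {}}"
proof -
  assume "finite C"
  have "{x \<in> sub_V V E k. host x \<inter> C \<noteq> {}}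
      \<subseteq> Inl ` C \<union> (\<Union>e\<in>{e \<in> edges E. e \<inter> C \<noteq> {}}. edge_interior k e)"
    by (auto simp: sub_V_eq dest: edge_interiorD(2))
  moreover have "finite (Inl ` C \<union> (\<Union>e\<in>{e \<in> edges E. e \<inter> C \<noteq> {}}. edge_interior k e))"
    using \<open>finite C\<close> finite_edges_meeting finite_edge_interior by blast
  ultimately show ?thesis
    by (rule finite_subset)
qed

text \<open>At its first exit from the vertices near \<open>C\<close> the path steps from inside an edge \<open>{y, z}\<close>
  with \<open>y \<in> C\<close> onto \<open>z \<notin> C\<close>; as \<open>z\<close> was not visited before, the edge was entered at \<open>y\<close> and
  crossed completely.\<close>

lemma path_leaves_along_edge:
  assumes \<gamma>: "\<gamma> \<in> paths_to_infinity (sub_V V E k) (sub_E E k) w"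
    and "finite C" and "host w \<subseteq> C"
  obtains y z where "E y z" "z \<notin> C" "edge_interior k {y, z} \<subseteq> range \<gamma>"
proof -
  from \<gamma> have \<gamma>0: "\<gamma> 0 = w" and \<gamma>V: "\<And>r. \<gamma> r \<in> sub_V V E k"
    and step: "\<And>r. \<gamma> (Suc r) = \<gamma> r \<or> sub_E E k (\<gamma> r) (\<gamma> (Suc r))"
    unfolding paths_to_infinity_def by auto
  define near where "near r \<longleftrightarrow> host (\<gamma> r) \<inter> C \<noteq> {}" for r
  obtain t where "\<not> near t"
    using paths_to_infinity_leave_finite[OF \<gamma> finite_sub_V_near[OF \<open>finite C\<close>]] \<gamma>V
    unfolding near_def by blast
  moreover have "near 0"
    using host_sub_V[OF \<gamma>V[of 0]] \<open>host w \<subseteq> C\<close> \<gamma>0 unfolding near_def by auto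
  ultimately obtain p where before: "\<forall>r\<le>p. near r" and "\<not> near (Suc p)"
    using ex_least_nat_less[of "\<lambda>r. \<not> near r" t] by auto
  then have "sub_E E k (\<gamma> p) (\<gamma> (Suc p))"
    using step[of p] unfolding near_def by auto
  moreover have "host (\<gamma> p) \<inter> C \<noteq> {}" "host (\<gamma> (Suc p)) \<inter> C = {}"
    using before \<open>\<not> near (Suc p)\<close> unfolding near_def by auto
  ultimately obtain y z where "E y z" "y \<in> C" "z \<notin> C"
    and inside: "\<gamma> p \<in> edge_interior k {y, z}" and exit: "\<gamma> (Suc p) = Inl z"
    using sub_E_leaving[where k = k, OF _ k_pos] by blast
  have "y \<noteq> z"
    using \<open>y \<in> C\<close> \<open>z \<notin> C\<close> by blast
  have outside: "\<gamma> 0 \<notin> edge_interior k {y, z}"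
    using \<gamma>0 \<open>host w \<subseteq> C\<close> \<open>z \<notin> C\<close> by (auto dest: edge_interiorD(2))
  have "\<gamma> r \<noteq> Inl z" if "r \<le> p" for r
    using before that \<open>z \<notin> C\<close> unfolding near_def by auto
  then have "edge_interior k {y, z} \<subseteq> range \<gamma>"
    using path_traverses_edge_before_exit[where \<gamma> = \<gamma> and k = k,
        OF step k_pos \<open>y \<noteq> z\<close> outside _ inside exit] by simp
  with \<open>E y z\<close> \<open>z \<notin> C\<close> show thesis
    by (rule that)
qed

lemma infinite_traversed_edges:
  assumes \<gamma>: "\<gamma> \<in> paths_to_infinity (sub_V V E k) (sub_E E k) w"
  shows "infinite {e \<in> edges E. edge_interior k e \<subseteq> range \<gamma>}" (is "infinite ?T")
proof
  assume "finite ?T"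
  define C where "C = \<Union>?T \<union> host w"
  have "\<gamma> 0 = w" "\<gamma> 0 \<in> sub_V V E k"
    using \<gamma> unfolding paths_to_infinity_def by auto
  then have "finite (host w)"
    using host_sub_V by simp
  moreover have "finite e" if "e \<in> edges E" for e
    using that by (rule edgesE) simp
  ultimately have "finite C"
    using \<open>finite ?T\<close> unfolding C_def by auto
  moreover have "host w \<subseteq> C"
    unfolding C_def by simp
  ultimately obtain y z where "E y z" "z \<notin> C" "edge_interior k {y, z} \<subseteq> range \<gamma>"
    by (rule path_leaves_along_edge[OF \<gamma>])
  then have "{y, z} \<in> ?T"
    by (auto simp: edges_def)
  then have "z \<in> C"
    unfolding C_def by blast
  with \<open>z \<notin> C\<close> show False ..
qed

lemma sum_subdivision_metric_edge:
  assumes "e \<in> edges E"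
  shows "(\<Sum>x\<in>edge_interior k e. subdivision_metric k x) = 1"
    and "(\<Sum>x\<in>edge_interior k e. (subdivision_metric k x)\<^sup>2) = 1 / real (k e)"
proof -
  obtain u v where "e = {u, v}" "u \<noteq> v"
    using assms by (rule edgesE)
  moreover have "k {u, v} > 0" by (rule k_pos)
  ultimately show "(\<Sum>x\<in>edge_interior k e. subdivision_metric k x) = 1"
    and "(\<Sum>x\<in>edge_interior k e. (subdivision_metric k x)\<^sup>2) = 1 / real (k e)"
    using sum_subdivision_metric_edge_interior[where k = k and f = "\<lambda>t. t"]
      sum_subdivision_metric_edge_interior[where k = k and f = "\<lambda>t. t\<^sup>2"]
    by (simp_all add: power2_eq_square)
qed

lemma m_length_subdivision_metric:
  assumes \<gamma>: "\<gamma> \<in> paths_to_infinity (sub_V V E k) (sub_E E k) w"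
  shows "m_length (subdivision_metric k) \<gamma> = \<infinity>"
proof -
  let ?m = "subdivision_metric k"
  have "of_nat N \<le> m_length ?m \<gamma>" for N
  proof -
    obtain D where D: "finite D" "card D = N" "D \<subseteq> {e \<in> edges E. edge_interior k e \<subseteq> range \<gamma>}"
      using infinite_arbitrarily_large[OF infinite_traversed_edges[OF \<gamma>]] by blast
    have "of_nat N = ennreal (\<Sum>e\<in>D. \<Sum>x\<in>edge_interior k e. ?m x)"
      using D sum_subdivision_metric_edge(1) by (simp add: subset_iff ennreal_of_nat_eq_real_of_nat)
    also have "\<dots> = ennreal (\<Sum>x\<in>\<Union>(edge_interior k ` D). ?m x)"
      using D(1) by (simp add: sum_UN_edge_interior)
    also have "\<dots> = (\<Sum>x\<in>\<Union>(edge_interior k ` D). ennreal (?m x))"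
      by (simp add: sum_ennreal subdivision_metric_nonneg)
    also have "\<dots> \<le> m_length ?m \<gamma>"
      unfolding m_length_def using D by (intro ensum_upper) (auto simp: finite_edge_interior)
    finally show ?thesis .
  qed
  then have "(SUP N. of_nat N :: ennreal) \<le> m_length ?m \<gamma>"
    by (intro SUP_least)
  then show ?thesis
    by (simp add: ennreal_SUP_of_nat_eq_top top_unique)
qed

lemma area_subdivision_metric_le:
  assumes "\<And>D. finite D \<Longrightarrow> D \<subseteq> edges E \<Longrightarrow> (\<Sum>e\<in>D. 1 / real (k e)) \<le> B"
  shows "area (sub_V V E k) (subdivision_metric k) \<le> ennreal B"
  unfolding area_def
proof (rule ensum_least)
  let ?m = "subdivision_metric k"
  fix F assume F: "finite F" "F \<subseteq> sub_V V E k"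
  define D where "D = host ` {x \<in> F. \<not> isl x}"
  have D: "finite D" "D \<subseteq> edges E"
    using F unfolding D_def by (auto intro: sub_V_inner(1))
  have "(\<Sum>x\<in>F. (?m x)\<^sup>2) = (\<Sum>x\<in>{x \<in> F. \<not> isl x}. (?m x)\<^sup>2)"
    using F(1) by (intro sum.mono_neutral_right) (auto simp: subdivision_metric_def)
  also have "\<dots> \<le> (\<Sum>x\<in>\<Union>(edge_interior k ` D). (?m x)\<^sup>2)"
  proof (rule sum_mono2)
    show "finite (\<Union>(edge_interior k ` D))"
      using D(1) by (simp add: finite_edge_interior)
    show "{x \<in> F. \<not> isl x} \<subseteq> \<Union>(edge_interior k ` D)"
      using F unfolding D_def by (blast intro: sub_V_inner(2))
  qed simp
  also have "\<dots> = (\<Sum>e\<in>D. 1 / real (k e))"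
    using D by (simp add: sum_UN_edge_interior sum_subdivision_metric_edge(2) subset_iff)
  also have "\<dots> \<le> B"
    using assms D by blast
  finally show "(\<Sum>x\<in>F. ennreal ((?m x)\<^sup>2)) \<le> ennreal B"
    by (simp add: sum_ennreal ennreal_leI)
qed

lemma area_subdivision_metric_pos:
  assumes "E u v"
  shows "0 < area (sub_V V E k) (subdivision_metric k)"
proof -
  define x where "x = sub_pt k u v 1"
  have "x \<in> edge_interior k {u, v}"
    using k_pos[of "{u, v}"] unfolding x_def edge_interior_doubleton by auto
  moreover have "{u, v} \<in> edges E"
    using assms by (auto simp: edges_def)
  ultimately have "x \<in> sub_V V E k" "subdivision_metric k x = 1 / real (k {u, v})"
    by (auto simp: sub_V_eq subdivision_metric_def dest: edge_interiorD)
  then have "0 < ennreal ((subdivision_metric k x)\<^sup>2)"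
    using k_pos[of "{u, v}"] by simp
  also have "\<dots> \<le> area (sub_V V E k) (subdivision_metric k)"
    unfolding area_def using ensum_upper[of "{x}"] \<open>x \<in> sub_V V E k\<close> by simp
  finally show ?thesis .
qed

end

theorem mainTheorem8:
  fixes V :: "'a set" and E :: "'a \<Rightarrow> 'a \<Rightarrow> bool"
  assumes "graph V E" and "infinite V"
  shows "\<exists>k :: 'a set \<Rightarrow> nat. \<forall>w \<in> sub_V V E k. VEL_parabolic (sub_V V E k) (sub_E E k) w"
proof -
  define k :: "'a set \<Rightarrow> nat" where "k e = 2 ^ to_nat_on (edges E) e" for e
  interpret subdivided_graph V E k
    using assms(1) by unfold_locales (simp_all add: k_def)
  obtain a where "a \<in> V"
    using assms(2) infinite_imp_nonempty by blast
  obtain b where "b \<in> V - {a}"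
    using assms(2) infinite_imp_nonempty[of "V - {a}"] by auto
  with \<open>a \<in> V\<close> obtain u v where "E u v"
    using assms(1) connected_graph_has_edge[of V E a b] by (auto simp: graph_def)
  have "area (sub_V V E k) (subdivision_metric k) \<le> ennreal 2"
    using sum_dyadic_edge_weights[OF assms(1)] by (intro area_subdivision_metric_le) (simp add: k_def)
  then have "area (sub_V V E k) (subdivision_metric k) < \<infinity>"
    unfolding infinity_ennreal_def using ennreal_less_top[of 2] by (rule le_less_trans)
  then have metric: "subdivision_metric k \<in> vertex_metrics (sub_V V E k)"
    using area_subdivision_metric_pos[OF \<open>E u v\<close>]
    by (simp add: vertex_metrics_def subdivision_metric_nonneg)
  show ?thesis
    by (intro exI[of _ k] ballI VEL_parabolicI[OF metric] m_length_subdivision_metric)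
qed

end
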